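(* There is $n_0$ such that for all even $n\ge n_0$ and all integers $d\ge n/2$, every $d$-regular graph $G$ on $n$ vertices satisfies $$M(G)\le\Big(\big(1+n^{-1/2}\big)\frac{d}{e^2}\Big)^{dn/2},$$ where $M(G)$ denotes the number of 1-factorizations of $G$.
   Context: A 1-factorization of a $d$-regular graph $G$ is an ordered $d$-tuple of pairwise edge-disjoint perfect matchings of $G$ whose union is $E(G)$ (equivalently, a proper edge-colouring of $G$ with colour set $[d]$). $e$ denotes Euler's number. *)

theory Defs
  imports Complex_Main "HOL-Library.FuncSet"
begin

definition simple_graph :: "'a set \<Rightarrow> 'a set set \<Rightarrow> bool" where
  "simple_graph V E \<longleftrightarrow> finite V \<and>
     (\<forall>e\<in>E. \<exists>u v. u \<in> V \<and> v \<in> V \<and> u \<noteq> v \<and> e = {u, v})"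

definition regular_graph :: "'a set \<Rightarrow> 'a set set \<Rightarrow> nat \<Rightarrow> bool" where
  "regular_graph V E d \<longleftrightarrow> simple_graph V E \<and> (\<forall>v\<in>V. card {e\<in>E. v \<in> e} = d)"

definition perfect_matching :: "'a set \<Rightarrow> 'a set set \<Rightarrow> 'a set set \<Rightarrow> bool" where
  "perfect_matching V E M \<longleftrightarrow> M \<subseteq> E \<and> (\<forall>v\<in>V. \<exists>!e. e \<in> M \<and> v \<in> e)"

text \<open>1-factorizations of a d-regular graph: ordered d-tuples (indexed by {0..<d})
  of pairwise edge-disjoint perfect matchings whose union is E.\<close>
definition one_factorizations :: "'a set \<Rightarrow> 'a set set \<Rightarrow> nat \<Rightarrow> (nat \<Rightarrow> 'a set set) set" where
  "one_factorizations V E d =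
     {F \<in> {..<d} \<rightarrow>\<^sub>E Pow E.
        (\<forall>i<d. perfect_matching V E (F i)) \<and>
        (\<forall>i<d. \<forall>j<d. i \<noteq> j \<longrightarrow> F i \<inter> F j = {}) \<and>
        (\<Union>i<d. F i) = E}"

definition num_one_factorizations :: "'a set \<Rightarrow> 'a set set \<Rightarrow> nat \<Rightarrow> nat" where
  "num_one_factorizations V E d = card (one_factorizations V E d)"

end

theory Submission
  imports Defs "HOL-Combinatorics.Transposition" "HOL-Real_Asymp.Real_Asymp"
begin

text \<open>Removing the first colour class of a 1-factorization of a \<open>k\<close>-regular graph leaves a
  1-factorization of a \<open>(k - 1)\<close>-regular graph, so \<open>M(G)\<close> is at most the product over \<open>k \<le> d\<close> of the
  maximal number of perfect matchings of a \<open>k\<close>-regular graph on \<open>n\<close> vertices. A pair of perfect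
  matchings is encoded injectively by a permutation \<open>\<sigma>\<close> with every \<open>\<sigma> v\<close> adjacent to \<open>v\<close>, so the
  square of that number is at most the permanent of the adjacency matrix, which by Bregman's
  theorem is at most \<open>(k!)\<^bsup>n/k\<^esup>\<close>. Finally \<open>\<Sum>\<^sub>k\<^sub>\<le>\<^sub>d ln (k!) / k = d ln d - 2d + O(log\<^sup>2 d)\<close>, and the
  error term is absorbed by the factor \<open>(1 + n\<^sup>-\<^sup>1\<^sup>/\<^sup>2)\<^bsup>dn/2\<^esup>\<close> because \<open>d \<ge> n/2\<close>.\<close>

section \<open>Bregman's theorem\<close>

lemma sum_ln_eq_ln_fact: "(\<Sum>k=1..n. ln (real k)) = ln (fact n)"
proof -
  have "ln (\<Prod>k=1..n. real k) = (\<Sum>k=1..n. ln (real k))" by (rule ln_prod) auto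
  then show ?thesis by (simp add: fact_prod)
qed

definition injective_selections :: "'a set \<Rightarrow> ('a \<Rightarrow> 'b set) \<Rightarrow> 'b set \<Rightarrow> ('a \<Rightarrow> 'b) set" where
  "injective_selections R N U = {\<sigma> \<in> R \<rightarrow>\<^sub>E UNIV. inj_on \<sigma> R \<and> (\<forall>i\<in>R. \<sigma> i \<in> N i - U)}"

text \<open>The probability that choosing each \<open>\<sigma> i\<close> uniformly among the elements of \<open>N i - U\<close> not yet
  chosen, in the order given by \<open>p\<close>, produces \<open>\<sigma>\<close>.\<close>
definition greedy_weight ::
    "'a set \<Rightarrow> ('a \<Rightarrow> 'b set) \<Rightarrow> 'b set \<Rightarrow> ('a \<Rightarrow> 'c::linorder) \<Rightarrow> ('a \<Rightarrow> 'b) \<Rightarrow> real" where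
  "greedy_weight R N U p \<sigma> = (\<Prod>i\<in>R. 1 / real (card (N i - U - \<sigma> ` {j\<in>R. p j < p i})))"

lemma finite_injective_selections:
  "finite R \<Longrightarrow> (\<And>i. i \<in> R \<Longrightarrow> finite (N i)) \<Longrightarrow> finite (injective_selections R N U)"
  by (rule finite_subset[OF _ finite_PiE[of R N]]) (auto simp: injective_selections_def)

lemma greedy_weight_remove_first:
  assumes R: "finite R" and x: "x \<in> R" and first: "\<And>i. i \<in> R \<Longrightarrow> i \<noteq> x \<Longrightarrow> p x < p i"
  shows "greedy_weight R N U p \<sigma> =
    1 / real (card (N x - U)) * greedy_weight (R - {x}) N (insert (\<sigma> x) U) p (restrict \<sigma> (R - {x}))"
proof -
  have "\<not> p j < p x" if "j \<in> R" for j
    using first[OF that] by (cases "j = x") auto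
  then have none_before: "{j\<in>R. p j < p x} = {}" by blast
  have "\<sigma> ` {j\<in>R. p j < p i} = insert (\<sigma> x) (restrict \<sigma> (R - {x}) ` {j\<in>R - {x}. p j < p i})"
    if "i \<in> R - {x}" for i
    using that first x by auto
  then have available: "N i - U - \<sigma> ` {j\<in>R. p j < p i} =
      N i - insert (\<sigma> x) U - restrict \<sigma> (R - {x}) ` {j\<in>R - {x}. p j < p i}" if "i \<in> R - {x}" for i
    using that by blast
  have "greedy_weight R N U p \<sigma> =
      1 / real (card (N x - U)) * (\<Prod>i\<in>R - {x}. 1 / real (card (N i - U - \<sigma> ` {j\<in>R. p j < p i})))"
    unfolding greedy_weight_def prod.remove[OF R x] none_before by simp
  also have "(\<Prod>i\<in>R - {x}. 1 / real (card (N i - U - \<sigma> ` {j\<in>R. p j < p i}))) =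
      greedy_weight (R - {x}) N (insert (\<sigma> x) U) p (restrict \<sigma> (R - {x}))"
    unfolding greedy_weight_def by (rule prod.cong) (simp_all add: available)
  finally show ?thesis .
qed

lemma sum_injective_selections_split:
  assumes x: "x \<in> R"
  shows "(\<Sum>\<sigma>\<in>injective_selections R N U. g (\<sigma> x) (restrict \<sigma> (R - {x}))) =
    (\<Sum>(c, \<tau>)\<in>Sigma (N x - U) (\<lambda>c. injective_selections (R - {x}) N (insert c U)). g c \<tau>)"
proof (rule sum.reindex_bij_witness[where j = "\<lambda>\<sigma>. (\<sigma> x, restrict \<sigma> (R - {x}))" and i = "\<lambda>(c, \<tau>). \<tau>(x := c)"])
  fix \<sigma> assume \<sigma>: "\<sigma> \<in> injective_selections R N U"
  show "(\<lambda>(c, \<tau>). \<tau>(x := c)) (\<sigma> x, restrict \<sigma> (R - {x})) = \<sigma>"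
    using \<sigma> x unfolding injective_selections_def by (auto simp: PiE_def extensional_def fun_eq_iff)
  show "(\<sigma> x, restrict \<sigma> (R - {x})) \<in> Sigma (N x - U) (\<lambda>c. injective_selections (R - {x}) N (insert c U))"
    using \<sigma> x unfolding injective_selections_def by (auto simp: inj_on_def)
  show "(\<lambda>(c, \<tau>). g c \<tau>) (\<sigma> x, restrict \<sigma> (R - {x})) = g (\<sigma> x) (restrict \<sigma> (R - {x}))" by simp
next
  fix q assume q: "q \<in> Sigma (N x - U) (\<lambda>c. injective_selections (R - {x}) N (insert c U))"
  obtain c \<tau> where q_eq: "q = (c, \<tau>)" by (cases q)
  have c: "c \<in> N x - U" and \<tau>: "\<tau> \<in> R - {x} \<rightarrow>\<^sub>E UNIV" "inj_on \<tau> (R - {x})"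
      "\<forall>i\<in>R - {x}. \<tau> i \<in> N i - insert c U"
    using q unfolding q_eq injective_selections_def by auto
  have "restrict (\<tau>(x := c)) (R - {x}) = \<tau>"
    using \<tau>(1) by (auto simp: fun_eq_iff PiE_def extensional_def)
  then show "((\<lambda>(c, \<tau>). \<tau>(x := c)) q x, restrict ((\<lambda>(c, \<tau>). \<tau>(x := c)) q) (R - {x})) = q"
    unfolding q_eq by simp
  have "c \<notin> \<tau> ` (R - {x})" using \<tau>(3) by auto
  then show "(\<lambda>(c, \<tau>). \<tau>(x := c)) q \<in> injective_selections R N U"
    unfolding q_eq injective_selections_def using c \<tau> x
    by (auto simp: PiE_def extensional_def inj_on_def)
qed

lemma sum_greedy_weight_le_1:
  assumes "finite R" "inj_on p R" "\<And>i. i \<in> R \<Longrightarrow> finite (N i)"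
  shows "(\<Sum>\<sigma>\<in>injective_selections R N U. greedy_weight R N U p \<sigma>) \<le> 1"
  using assms
proof (induction "card R" arbitrary: R U rule: less_induct)
  case less
  show ?case
  proof (cases "R = {}")
    case True
    then show ?thesis by (simp add: injective_selections_def greedy_weight_def)
  next
    case False
    obtain x where x: "x \<in> R" "p x = Min (p ` R)"
      using False less.prems(1) Min_in[of "p ` R"] by fastforce
    have first: "p x < p i" if "i \<in> R" "i \<noteq> x" for i
      using x less.prems(1,2) that by (metis Min_le finite_imageI image_eqI inj_on_def order_le_neq_trans)
    have "card (R - {x}) < card R" using less.prems(1) x(1) by (rule card_Diff1_less)
    moreover have "finite (R - {x})" "inj_on p (R - {x})" "\<And>i. i \<in> R - {x} \<Longrightarrow> finite (N i)"
      using less.prems by (auto intro: inj_on_subset)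
    ultimately have IH: "(\<Sum>\<tau>\<in>injective_selections (R - {x}) N U'. greedy_weight (R - {x}) N U' p \<tau>) \<le> 1"
      for U' by (rule less.hyps)
    define C where "C = N x - U"
    have "(\<Sum>\<sigma>\<in>injective_selections R N U. greedy_weight R N U p \<sigma>) =
        (\<Sum>\<sigma>\<in>injective_selections R N U.
          1 / real (card C) * greedy_weight (R - {x}) N (insert (\<sigma> x) U) p (restrict \<sigma> (R - {x})))"
      unfolding C_def
      by (rule sum.cong[OF refl], rule greedy_weight_remove_first[where p = p, OF less.prems(1) x(1) first])
    also have "\<dots> = (\<Sum>(c, \<tau>)\<in>Sigma C (\<lambda>c. injective_selections (R - {x}) N (insert c U)).
        1 / real (card C) * greedy_weight (R - {x}) N (insert c U) p \<tau>)"
      unfolding C_def by (rule sum_injective_selections_split[OF x(1)])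
    also have "\<dots> = (\<Sum>c\<in>C. 1 / real (card C) *
        (\<Sum>\<tau>\<in>injective_selections (R - {x}) N (insert c U). greedy_weight (R - {x}) N (insert c U) p \<tau>))"
      using less.prems(1,3) x(1) by (subst sum.Sigma[symmetric])
        (auto simp: C_def sum_distrib_left intro!: finite_injective_selections)
    also have "\<dots> \<le> (\<Sum>c\<in>C. 1 / real (card C))"
      by (intro sum_mono mult_left_le) (auto simp: IH)
    also have "\<dots> \<le> 1" by (cases "C = {}") (auto simp: C_def less.prems(3) x)
    finally show ?thesis .
  qed
qed

text \<open>Summing \<open>ln (s w) \<le> s w - 1\<close> over \<open>S\<close>, with \<open>s = card S\<close> and \<open>w\<close> the greedy weights,
  whose sum is at most 1.\<close>
lemma card_mult_ln_card_le_sum_ln_available: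
  fixes p :: "'a \<Rightarrow> 'c::linorder"
  assumes V: "finite V" and N: "\<And>i. i \<in> V \<Longrightarrow> finite (N i)"
    and S: "S \<subseteq> injective_selections V N {}" and p: "inj_on p V"
  shows "real (card S) * ln (card S) \<le> (\<Sum>\<sigma>\<in>S. \<Sum>i\<in>V. ln (card (N i - \<sigma> ` {j\<in>V. p j < p i})))"
proof (cases "S = {}")
  case True then show ?thesis by simp
next
  case False
  define s where "s = real (card S)"
  define w where "w = greedy_weight V N {} p"
  define L where "L \<sigma> i = real (card (N i - \<sigma> ` {j\<in>V. p j < p i}))" for \<sigma> i
  have fin: "finite (injective_selections V N {})" using V N by (rule finite_injective_selections)
  then have s_pos: "s > 0" using False S s_def by (simp add: card_gt_0_iff finite_subset)
  have L_pos: "0 < L \<sigma> i" if "\<sigma> \<in> S" "i \<in> V" for \<sigma> i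
  proof -
    have "\<sigma> i \<in> N i - \<sigma> ` {j\<in>V. p j < p i}"
      using that S by (auto simp: injective_selections_def inj_on_def)
    then show ?thesis using N[OF that(2)] by (auto simp: L_def card_gt_0_iff)
  qed
  have sum_w: "(\<Sum>\<sigma>\<in>S. w \<sigma>) \<le> 1"
  proof -
    have "(\<Sum>\<sigma>\<in>S. w \<sigma>) \<le> (\<Sum>\<sigma>\<in>injective_selections V N {}. w \<sigma>)"
      by (rule sum_mono2[OF fin S]) (simp add: w_def greedy_weight_def prod_nonneg)
    also have "\<dots> \<le> 1" unfolding w_def using V p N by (rule sum_greedy_weight_le_1)
    finally show ?thesis .
  qed
  have "ln s - (\<Sum>i\<in>V. ln (L \<sigma> i)) \<le> s * w \<sigma> - 1" if \<sigma>: "\<sigma> \<in> S" for \<sigma>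
  proof -
    have w: "w \<sigma> = (\<Prod>i\<in>V. 1 / L \<sigma> i)" unfolding w_def greedy_weight_def L_def by simp
    have "ln (\<Prod>i\<in>V. 1 / L \<sigma> i) = (\<Sum>i\<in>V. ln (1 / L \<sigma> i))"
      by (intro ln_prod) (use L_pos[OF \<sigma>] V in force)+
    also have "\<dots> = - (\<Sum>i\<in>V. ln (L \<sigma> i))"
      using L_pos[OF \<sigma>] by (auto simp: ln_div sum_negf[symmetric] intro!: sum.cong)
    finally have "ln (w \<sigma>) = - (\<Sum>i\<in>V. ln (L \<sigma> i))" unfolding w .
    moreover have "0 < w \<sigma>" unfolding w using L_pos[OF \<sigma>] by (simp add: prod_pos)
    ultimately show ?thesis using ln_le_minus_one[of "s * w \<sigma>"] s_pos by (simp add: ln_mult)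
  qed
  then have "(\<Sum>\<sigma>\<in>S. ln s - (\<Sum>i\<in>V. ln (L \<sigma> i))) \<le> (\<Sum>\<sigma>\<in>S. s * w \<sigma> - 1)"
    by (rule sum_mono)
  also have "\<dots> = s * (\<Sum>\<sigma>\<in>S. w \<sigma>) - s"
    by (simp add: sum_subtractf sum_distrib_left s_def)
  also have "\<dots> \<le> 0" using sum_w s_pos by (simp add: mult_left_le)
  finally show ?thesis by (simp add: sum_subtractf s_def L_def)
qed

definition tail_rank :: "('a \<Rightarrow> 'c::linorder) \<Rightarrow> 'a set \<Rightarrow> 'a \<Rightarrow> nat" where
  "tail_rank p B x = card {b\<in>B. p x \<le> p b}"

lemma tail_rank_image:
  assumes "finite B" "inj_on p B"
  shows "tail_rank p B ` B = {1..card B}"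
proof -
  have "tail_rank p B y < tail_rank p B x" if "x \<in> B" "p x < p y" for x y
  proof -
    have "x \<notin> {b\<in>B. p y \<le> p b}" "x \<in> {b\<in>B. p x \<le> p b}" using that by auto
    moreover have "{b\<in>B. p y \<le> p b} \<subseteq> {b\<in>B. p x \<le> p b}" using that by auto
    ultimately have "{b\<in>B. p y \<le> p b} \<subset> {b\<in>B. p x \<le> p b}" by blast
    then show ?thesis unfolding tail_rank_def using assms(1) by (simp add: psubset_card_mono)
  qed
  then have "inj_on (tail_rank p B) B"
    using assms(2) by (intro inj_onI) (metis inj_on_contraD less_irrefl linorder_neqE)
  moreover have "tail_rank p B ` B \<subseteq> {1..card B}"
    using assms(1) by (auto simp: tail_rank_def Suc_le_eq card_gt_0_iff intro!: card_mono)
  ultimately show ?thesis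
    by (metis card_atLeastAtMost card_image card_subset_eq diff_Suc_1 finite_atLeastAtMost)
qed

lemma sum_ln_tail_rank:
  assumes "finite B" "inj_on p B"
  shows "(\<Sum>x\<in>B. ln (tail_rank p B x)) = ln (fact (card B))"
proof -
  have "inj_on (tail_rank p B) B"
    using assms tail_rank_image by (metis card_atLeastAtMost card_image_le diff_Suc_1 eq_card_imp_inj_on)
  then have "(\<Sum>x\<in>B. ln (tail_rank p B x)) = (\<Sum>k=1..card B. ln (real k))"
    using sum.reindex[of "tail_rank p B" B "\<lambda>k. ln (real k)"] tail_rank_image[OF assms] by simp
  then show ?thesis using sum_ln_eq_ln_fact[of "card B"] by simp
qed

definition orderings :: "'a set \<Rightarrow> ('a \<Rightarrow> nat) set" where
  "orderings V = {p \<in> V \<rightarrow>\<^sub>E {..<card V}. inj_on p V}"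

lemma finite_orderings: "finite V \<Longrightarrow> finite (orderings V)"
  unfolding orderings_def by (rule finite_subset[OF _ finite_PiE[of V "\<lambda>_. {..<card V}"]]) auto

lemma orderings_nonempty:
  assumes "finite V"
  shows "orderings V \<noteq> {}"
proof -
  obtain h where "bij_betw h {0..<card V} V" using ex_bij_betw_nat_finite[OF assms] by blast
  then have "bij_betw (inv_into {0..<card V} h) V {0..<card V}" by (rule bij_betw_inv_into)
  then have "restrict (inv_into {0..<card V} h) V \<in> orderings V"
    unfolding orderings_def bij_betw_def by (auto simp: inj_on_def)
  then show ?thesis by auto
qed

text \<open>Precomposing with the transposition of \<open>a\<close> and \<open>b\<close> permutes the orderings and exchanges
  the tail ranks of \<open>a\<close> and \<open>b\<close>.\<close>
lemma sum_orderings_tail_rank_eq: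
  assumes B: "B \<subseteq> V" and a: "a \<in> B" and b: "b \<in> B"
  shows "(\<Sum>p\<in>orderings V. f (tail_rank p B a)) = (\<Sum>p\<in>orderings V. f (tail_rank p B b))"
proof (rule sum.reindex_bij_witness[where i = "\<lambda>p. restrict (p \<circ> transpose a b) V"
                                        and j = "\<lambda>p. restrict (p \<circ> transpose a b) V"])
  have t_V: "transpose a b x \<in> V \<longleftrightarrow> x \<in> V" for x
    using a b B by (auto simp: transpose_def)
  have t_B: "transpose a b x \<in> B \<longleftrightarrow> x \<in> B" for x
    using a b by (auto simp: transpose_def)
  show in_orderings: "restrict (p \<circ> transpose a b) V \<in> orderings V" if "p \<in> orderings V" for p
    using that t_V unfolding orderings_def inj_on_def by auto (metis transpose_involutory)
  show "restrict (restrict (p \<circ> transpose a b) V \<circ> transpose a b) V = p" if "p \<in> orderings V" for p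
    using that t_V unfolding orderings_def by (auto simp: fun_eq_iff PiE_def extensional_def)
  then show "restrict (restrict (p \<circ> transpose a b) V \<circ> transpose a b) V = p" if "p \<in> orderings V" for p
    using that .
  show "restrict (p \<circ> transpose a b) V \<in> orderings V" if "p \<in> orderings V" for p
    using in_orderings that .
  show "f (tail_rank (restrict (p \<circ> transpose a b) V) B b) = f (tail_rank p B a)" for p
  proof -
    have "{c\<in>B. restrict (p \<circ> transpose a b) V b \<le> restrict (p \<circ> transpose a b) V c} =
        {c\<in>B. p a \<le> p (transpose a b c)}"
      using B b by (intro Collect_cong) auto
    also have "\<dots> = transpose a b ` {c\<in>B. p a \<le> p c}"
      by (rule set_eqI) (simp add: in_transpose_image_iff t_B)
    finally show ?thesis
      unfolding tail_rank_def by (simp add: card_image)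
  qed
qed

lemma sum_orderings_ln_tail_rank:
  assumes V: "finite V" and B: "B \<subseteq> V" and i: "i \<in> B"
  shows "(\<Sum>p\<in>orderings V. ln (tail_rank p B i)) = real (card (orderings V)) * ln (fact (card B)) / card B"
proof -
  have "finite B" using V B finite_subset by blast
  then have "card B > 0" using i by (auto simp: card_gt_0_iff)
  have "(\<Sum>b\<in>B. \<Sum>p\<in>orderings V. ln (tail_rank p B b)) =
      (\<Sum>b\<in>B. \<Sum>p\<in>orderings V. ln (tail_rank p B i))"
    by (rule sum.cong[OF refl]) (rule sum_orderings_tail_rank_eq[OF B _ i])
  then have "real (card B) * (\<Sum>p\<in>orderings V. ln (tail_rank p B i)) =
      (\<Sum>b\<in>B. \<Sum>p\<in>orderings V. ln (tail_rank p B b))"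
    by simp
  also have "\<dots> = (\<Sum>p\<in>orderings V. \<Sum>b\<in>B. ln (tail_rank p B b))" by (rule sum.swap)
  also have "\<dots> = (\<Sum>p\<in>orderings V. ln (fact (card B)))"
  proof (rule sum.cong[OF refl])
    fix p assume "p \<in> orderings V"
    then have "inj_on p B" using B by (auto simp: orderings_def intro: inj_on_subset)
    then show "(\<Sum>b\<in>B. ln (tail_rank p B b)) = ln (fact (card B))"
      by (rule sum_ln_tail_rank[OF \<open>finite B\<close>])
  qed
  finally show ?thesis using \<open>card B > 0\<close> by (simp add: field_simps)
qed

definition permutations_within :: "'a set \<Rightarrow> ('a \<Rightarrow> 'a set) \<Rightarrow> ('a \<Rightarrow> 'a) set" where
  "permutations_within V N = {\<sigma> \<in> V \<rightarrow>\<^sub>E V. bij_betw \<sigma> V V \<and> (\<forall>v\<in>V. \<sigma> v \<in> N v)}"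

lemma finite_permutations_within: "finite V \<Longrightarrow> finite (permutations_within V N)"
  unfolding permutations_within_def by (rule finite_subset[OF _ finite_PiE[of V "\<lambda>_. V"]]) auto

text \<open>The elements of \<open>N i\<close> still available at step \<open>i\<close> are the images of the vertices of
  \<open>\<sigma>\<^sup>-\<^sup>1 (N i)\<close> not before \<open>i\<close>, so their number is a tail rank in a set of size \<open>k\<close>.\<close>
lemma sum_orderings_ln_available:
  assumes V: "finite V" and NV: "\<And>v. v \<in> V \<Longrightarrow> N v \<subseteq> V" and k: "card (N i) = k"
    and \<sigma>: "\<sigma> \<in> permutations_within V N" and i: "i \<in> V"
  shows "(\<Sum>p\<in>orderings V. ln (card (N i - \<sigma> ` {j\<in>V. p j < p i}))) =
      real (card (orderings V)) * ln (fact k) / k"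
proof -
  define B where "B = {b\<in>V. \<sigma> b \<in> N i}"
  have bij: "bij_betw \<sigma> V V" and inj: "inj_on \<sigma> V" and \<sigma>_N: "\<forall>v\<in>V. \<sigma> v \<in> N v"
    using \<sigma> unfolding permutations_within_def by (auto simp: bij_betw_def)
  have B_V: "B \<subseteq> V" and i_B: "i \<in> B" using i \<sigma>_N by (auto simp: B_def)
  have "\<sigma> ` B = \<sigma> ` V \<inter> N i" unfolding B_def by auto
  also have "\<dots> = N i" using bij NV[OF i] by (auto simp: bij_betw_def)
  finally have \<sigma>_B: "\<sigma> ` B = N i" .
  have "card B = k" using card_image[OF inj_on_subset[OF inj B_V]] \<sigma>_B k by simp
  have "N i - \<sigma> ` {j\<in>V. p j < p i} = \<sigma> ` {b\<in>B. p i \<le> p b}" for p :: "'a \<Rightarrow> nat"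
  proof -
    have "{b\<in>B. p i \<le> p b} = B - {j\<in>V. p j < p i}" using B_V by auto
    moreover have "\<sigma> ` (B - {j\<in>V. p j < p i}) = \<sigma> ` B - \<sigma> ` {j\<in>V. p j < p i}"
      by (rule inj_on_image_set_diff[OF inj]) (use B_V in auto)
    ultimately show ?thesis using \<sigma>_B by simp
  qed
  then have "card (N i - \<sigma> ` {j\<in>V. p j < p i}) = tail_rank p B i" for p :: "'a \<Rightarrow> nat"
    unfolding tail_rank_def using card_image[OF inj_on_subset[OF inj, of "{b\<in>B. p i \<le> p b}"]] B_V
    by auto
  then show ?thesis using sum_orderings_ln_tail_rank[OF V B_V i_B] \<open>card B = k\<close> by simp
qed

text \<open>Bregman's theorem for \<open>k\<close>-regular 0-1 matrices: the permanent of the matrix with rows \<open>N v\<close>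
  is the number of \<open>permutations_within V N\<close>.\<close>
theorem card_permutations_within_le:
  assumes V: "finite V" and NV: "\<And>v. v \<in> V \<Longrightarrow> N v \<subseteq> V" and k: "\<And>v. v \<in> V \<Longrightarrow> card (N v) = k"
  shows "real (card (permutations_within V N)) \<le> exp (real (card V) * ln (fact k) / real k)"
proof -
  define S where "S = permutations_within V N"
  define s where "s = real (card S)"
  define c where "c = real (card (orderings V))"
  define L :: "('a \<Rightarrow> 'a) \<Rightarrow> ('a \<Rightarrow> nat) \<Rightarrow> 'a \<Rightarrow> real"
    where "L \<sigma> p i = ln (card (N i - \<sigma> ` {j\<in>V. p j < p i}))" for \<sigma> p i
  have N_fin: "finite (N v)" if "v \<in> V" for v using NV[OF that] V finite_subset by blast
  have c_pos: "c > 0" using finite_orderings[OF V] orderings_nonempty[OF V] by (simp add: c_def card_gt_0_iff)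
  show ?thesis
  proof (cases "S = {}")
    case True then show ?thesis by (simp add: S_def)
  next
    case False
    then have s_pos: "s > 0" using finite_permutations_within[OF V] by (simp add: s_def S_def card_gt_0_iff)
    have "(c * s) * ln s = (\<Sum>p\<in>orderings V. s * ln s)" by (simp add: c_def)
    also have "\<dots> \<le> (\<Sum>p\<in>orderings V. \<Sum>\<sigma>\<in>S. \<Sum>i\<in>V. L \<sigma> p i)"
    proof (rule sum_mono)
      fix p assume "p \<in> orderings V"
      then show "s * ln s \<le> (\<Sum>\<sigma>\<in>S. \<Sum>i\<in>V. L \<sigma> p i)"
        unfolding s_def L_def using V N_fin
        by (intro card_mult_ln_card_le_sum_ln_available)
          (auto simp: S_def permutations_within_def injective_selections_def orderings_def bij_betw_def)
    qed
    also have "\<dots> = (\<Sum>\<sigma>\<in>S. \<Sum>i\<in>V. \<Sum>p\<in>orderings V. L \<sigma> p i)"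
      by (subst sum.swap) (simp add: sum.swap[of _ "orderings V"])
    also have "\<dots> = (\<Sum>\<sigma>\<in>S. \<Sum>i\<in>V. c * ln (fact k) / k)"
      unfolding L_def c_def S_def using V NV k by (simp add: sum_orderings_ln_available)
    also have "\<dots> = (c * s) * (real (card V) * ln (fact k) / k)" by (simp add: s_def)
    finally have "ln s \<le> real (card V) * ln (fact k) / k"
      by (subst (asm) mult_le_cancel_left_pos) (use c_pos s_pos in auto)
    have "s = exp (ln s)" using s_pos by simp
    also have "\<dots> \<le> exp (real (card V) * ln (fact k) / k)" using \<open>ln s \<le> _\<close> by simp
    finally show ?thesis by (simp add: s_def S_def)
  qed
qed

section \<open>Pairs of perfect matchings as permutations\<close>

definition fixpoint_free_involutions :: "'a set \<Rightarrow> ('a \<Rightarrow> 'a set) \<Rightarrow> ('a \<Rightarrow> 'a) set" where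
  "fixpoint_free_involutions V N =
     {m \<in> V \<rightarrow>\<^sub>E V. \<forall>v\<in>V. m (m v) = v \<and> m v \<noteq> v \<and> m v \<in> N v}"

definition graph_edges :: "'a set \<Rightarrow> ('a \<Rightarrow> 'a) \<Rightarrow> 'a rel" where
  "graph_edges V h = {(x, h x) | x. x \<in> V} \<union> {(h x, x) | x. x \<in> V}"

definition component_min :: "'a::linorder set \<Rightarrow> ('a \<Rightarrow> 'a) \<Rightarrow> 'a \<Rightarrow> 'a" where
  "component_min V h v = Min ((graph_edges V h)\<^sup>* `` {v})"

lemma sym_graph_edges: "sym (graph_edges V h)"
  by (auto simp: sym_def graph_edges_def)

lemma sym_rtrancl_graph_edges: "sym ((graph_edges V h)\<^sup>*)"
  by (rule sym_rtrancl[OF sym_graph_edges])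

lemma graph_edges_subsetI:
  assumes "\<And>v. v \<in> V \<Longrightarrow> (v, h v) \<in> graph_edges V g"
  shows "graph_edges V h \<subseteq> graph_edges V g"
proof
  fix e assume "e \<in> graph_edges V h"
  then obtain v where "v \<in> V" "e = (v, h v) \<or> e = (h v, v)" by (auto simp: graph_edges_def)
  then show "e \<in> graph_edges V g" using assms symD[OF sym_graph_edges] by metis
qed

lemma rtrancl_graph_edges_subset:
  assumes "\<And>x. x \<in> V \<Longrightarrow> h x \<in> V" "(v, u) \<in> (graph_edges V h)\<^sup>*"
  shows "u \<in> insert v V"
  using assms(2) by induction (use assms(1) in \<open>auto simp: graph_edges_def\<close>)

lemma component_min_reachable:
  assumes "finite V" "\<And>x. x \<in> V \<Longrightarrow> h x \<in> V"
  shows "(v, component_min V h v) \<in> (graph_edges V h)\<^sup>*"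
proof -
  have "(graph_edges V h)\<^sup>* `` {v} \<subseteq> insert v V"
    using rtrancl_graph_edges_subset[of V h v] assms(2) by blast
  then have "finite ((graph_edges V h)\<^sup>* `` {v})" using assms(1) finite_subset by blast
  then show ?thesis unfolding component_min_def using Min_in[of "(graph_edges V h)\<^sup>* `` {v}"] by auto
qed

lemma component_min_eq:
  assumes "(a, b) \<in> (graph_edges V h)\<^sup>*"
  shows "component_min V h a = component_min V h b"
proof -
  have "(b, a) \<in> (graph_edges V h)\<^sup>*" using assms sym_rtrancl_graph_edges by (rule symD[rotated])
  then have "(graph_edges V h)\<^sup>* `` {a} = (graph_edges V h)\<^sup>* `` {b}"
    using assms by (auto intro: rtrancl_trans)
  then show ?thesis unfolding component_min_def by simp
qed

definition lower_side :: "'a::linorder set \<Rightarrow> ('a \<Rightarrow> 'a) \<Rightarrow> ('a \<Rightarrow> 'a) \<Rightarrow> 'a set" where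
  "lower_side V h m = {v\<in>V. component_min V h v < component_min V h (m v)}"

text \<open>On each pair of orbits of \<open>m\<^sub>2 \<circ> m\<^sub>1\<close> exchanged by \<open>m\<^sub>1\<close>, follow \<open>m\<^sub>1\<close> on the orbit with the
  smaller minimum and \<open>m\<^sub>2\<close> on the other one.\<close>
definition merge_matchings :: "'a::linorder set \<Rightarrow> ('a \<Rightarrow> 'a) \<Rightarrow> ('a \<Rightarrow> 'a) \<Rightarrow> 'a \<Rightarrow> 'a" where
  "merge_matchings V m\<^sub>1 m\<^sub>2 =
     restrict (\<lambda>v. if v \<in> lower_side V (m\<^sub>2 \<circ> m\<^sub>1) m\<^sub>1 then m\<^sub>1 v else m\<^sub>2 v) V"

locale matching_pair =
  fixes V :: "'a::linorder set" and m\<^sub>1 m\<^sub>2 :: "'a \<Rightarrow> 'a"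
  assumes finite_V: "finite V"
    and m\<^sub>1: "\<And>v. v \<in> V \<Longrightarrow> m\<^sub>1 v \<in> V \<and> m\<^sub>1 (m\<^sub>1 v) = v \<and> m\<^sub>1 v \<noteq> v"
    and m\<^sub>2: "\<And>v. v \<in> V \<Longrightarrow> m\<^sub>2 v \<in> V \<and> m\<^sub>2 (m\<^sub>2 v) = v \<and> m\<^sub>2 v \<noteq> v"
begin

definition "\<rho> = m\<^sub>2 \<circ> m\<^sub>1"
definition "\<rho>' = m\<^sub>1 \<circ> m\<^sub>2"

abbreviation "f \<equiv> component_min V \<rho>"
abbreviation "A \<equiv> lower_side V \<rho> m\<^sub>1"
abbreviation "\<sigma> \<equiv> merge_matchings V m\<^sub>1 m\<^sub>2"

lemma rho_in: "x \<in> V \<Longrightarrow> \<rho> x \<in> V" and rho'_in: "x \<in> V \<Longrightarrow> \<rho>' x \<in> V"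
  unfolding \<rho>_def \<rho>'_def using m\<^sub>1 m\<^sub>2 by auto

lemma rho'_rho: "x \<in> V \<Longrightarrow> \<rho>' (\<rho> x) = x" and rho_rho': "x \<in> V \<Longrightarrow> \<rho> (\<rho>' x) = x"
  unfolding \<rho>_def \<rho>'_def using m\<^sub>1 m\<^sub>2 by auto

lemma rho_pow_in: "x \<in> V \<Longrightarrow> (\<rho> ^^ j) x \<in> V" and rho'_pow_in: "x \<in> V \<Longrightarrow> (\<rho>' ^^ j) x \<in> V"
  by (induction j) (auto simp: rho_in rho'_in)

lemma rho'_pow_rho_pow: "x \<in> V \<Longrightarrow> (\<rho>' ^^ a) ((\<rho> ^^ (a + b)) x) = (\<rho> ^^ b) x"
proof (induction a)
  case (Suc a)
  have "(\<rho>' ^^ Suc a) ((\<rho> ^^ (Suc a + b)) x) = (\<rho>' ^^ a) (\<rho>' (\<rho> ((\<rho> ^^ (a + b)) x)))"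
    by (simp add: funpow_swap1)
  also have "\<dots> = (\<rho>' ^^ a) ((\<rho> ^^ (a + b)) x)" using rho'_rho rho_pow_in Suc.prems by simp
  finally show ?case using Suc by simp
qed simp

lemma m\<^sub>1_rho_pow: "x \<in> V \<Longrightarrow> m\<^sub>1 ((\<rho> ^^ j) x) = (\<rho>' ^^ j) (m\<^sub>1 x)"
  by (induction j) (simp_all add: \<rho>_def \<rho>'_def m\<^sub>1 rho_pow_in[unfolded \<rho>_def])

lemma m\<^sub>1_rho'_pow: "x \<in> V \<Longrightarrow> m\<^sub>1 ((\<rho>' ^^ j) x) = (\<rho> ^^ j) (m\<^sub>1 x)"
proof (induction j)
  case (Suc j)
  have "m\<^sub>1 (\<rho>' y) = \<rho> (m\<^sub>1 y)" if "y \<in> V" for y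
    using m\<^sub>1[of "m\<^sub>2 y"] m\<^sub>1[of y] m\<^sub>2[of y] that by (simp add: \<rho>_def \<rho>'_def)
  then show ?case using Suc rho'_pow_in by simp
qed simp

lemma reachable_rho_pow:
  assumes "v \<in> V" "(v, u) \<in> (graph_edges V \<rho>)\<^sup>*"
  shows "\<exists>j. u = (\<rho> ^^ j) v \<or> u = (\<rho>' ^^ j) v"
  using assms(2)
proof (induction rule: rtrancl_induct)
  case base then show ?case by (intro exI[of _ 0]) simp
next
  case (step y z)
  then obtain j where j: "y = (\<rho> ^^ j) v \<or> y = (\<rho>' ^^ j) v" by blast
  from step.hyps(2) consider "z = \<rho> y" | "y = \<rho> z" "z \<in> V" unfolding graph_edges_def by auto
  then show ?case
  proof cases
    case 1
    show ?thesis
    proof (cases j)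
      case (Suc i)
      then have "z = (\<rho> ^^ Suc j) v \<or> z = \<rho> (\<rho>' ((\<rho>' ^^ i) v))" using 1 j by auto
      then show ?thesis using rho_rho' rho'_pow_in assms(1) by metis
    qed (use 1 j in \<open>auto intro: exI[of _ 1]\<close>)
  next
    case 2
    then have z: "z = \<rho>' y" using rho'_rho by simp
    show ?thesis
    proof (cases j)
      case (Suc i)
      then have "z = (\<rho>' ^^ Suc j) v \<or> z = \<rho>' (\<rho> ((\<rho> ^^ i) v))" using z j by auto
      then show ?thesis using rho'_rho rho_pow_in assms(1) by metis
    qed (use z j in \<open>auto intro: exI[of _ 1]\<close>)
  qed
qed

text \<open>If \<open>m\<^sub>1 v = \<rho>\<^sup>j v\<close> then \<open>m\<^sub>1\<close> fixes \<open>\<rho>\<^sup>a v\<close> (\<open>j = 2a\<close>) or \<open>m\<^sub>1\<close> and \<open>m\<^sub>2\<close> agree at \<open>\<rho>\<^sup>a v\<close>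
  (\<open>j = 2a + 1\<close>), both impossible.\<close>
lemma m\<^sub>1_neq_rho_pow: "v \<in> V \<Longrightarrow> m\<^sub>1 v \<noteq> (\<rho> ^^ j) v"
proof
  assume v: "v \<in> V" and eq: "m\<^sub>1 v = (\<rho> ^^ j) v"
  obtain a where "j = 2 * a \<or> j = 2 * a + 1" by (metis oddE evenE)
  define u where "u = (\<rho> ^^ a) v"
  have u: "u \<in> V" using rho_pow_in v u_def by blast
  have m\<^sub>1_u: "m\<^sub>1 u = (\<rho>' ^^ a) ((\<rho> ^^ j) v)" unfolding u_def using m\<^sub>1_rho_pow v eq by simp
  from \<open>j = 2 * a \<or> j = 2 * a + 1\<close> show False
  proof
    assume "j = 2 * a"
    then have "m\<^sub>1 u = u" using m\<^sub>1_u rho'_pow_rho_pow[OF v, of a a] by (simp add: u_def mult_2)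
    then show False using m\<^sub>1 u by blast
  next
    assume "j = 2 * a + 1"
    then have "m\<^sub>1 u = \<rho> u" using m\<^sub>1_u rho'_pow_rho_pow[OF v, of a "Suc a"] by (simp add: u_def mult_2)
    then have "m\<^sub>1 u = m\<^sub>2 (m\<^sub>1 u)" unfolding \<rho>_def by simp
    then show False using m\<^sub>1 m\<^sub>2 u by metis
  qed
qed

lemma m\<^sub>1_not_reachable: "v \<in> V \<Longrightarrow> (v, m\<^sub>1 v) \<notin> (graph_edges V \<rho>)\<^sup>*"
proof
  assume v: "v \<in> V" and "(v, m\<^sub>1 v) \<in> (graph_edges V \<rho>)\<^sup>*"
  then obtain j where "m\<^sub>1 v = (\<rho> ^^ j) v \<or> m\<^sub>1 v = (\<rho>' ^^ j) v" using reachable_rho_pow by blast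
  then show False
  proof
    assume "m\<^sub>1 v = (\<rho>' ^^ j) v"
    then have "m\<^sub>1 (m\<^sub>1 v) = (\<rho> ^^ j) (m\<^sub>1 v)" using m\<^sub>1_rho'_pow v by simp
    then show False using m\<^sub>1_neq_rho_pow[of "m\<^sub>1 v" j] m\<^sub>1 v by simp
  qed (use m\<^sub>1_neq_rho_pow v in blast)
qed

lemma component_min_m\<^sub>1_neq: "v \<in> V \<Longrightarrow> f v \<noteq> f (m\<^sub>1 v)"
proof
  assume v: "v \<in> V" and eq: "f v = f (m\<^sub>1 v)"
  have "(v, f v) \<in> (graph_edges V \<rho>)\<^sup>*" "(m\<^sub>1 v, f (m\<^sub>1 v)) \<in> (graph_edges V \<rho>)\<^sup>*"
    using component_min_reachable[of V \<rho>, OF finite_V rho_in] by auto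
  then have "(v, m\<^sub>1 v) \<in> (graph_edges V \<rho>)\<^sup>*"
    using eq symD[OF sym_rtrancl_graph_edges] rtrancl_trans by metis
  then show False using m\<^sub>1_not_reachable v by blast
qed

lemma component_min_rho: "u \<in> V \<Longrightarrow> f (\<rho> u) = f u"
  by (rule component_min_eq[symmetric]) (auto simp: graph_edges_def)

lemma component_min_rho': "u \<in> V \<Longrightarrow> f (\<rho>' u) = f u"
  using component_min_rho[of "\<rho>' u"] rho'_in rho_rho' by simp

lemma component_min_m\<^sub>2: "v \<in> V \<Longrightarrow> f (m\<^sub>2 v) = f (m\<^sub>1 v)"
  using component_min_rho[of "m\<^sub>1 v"] m\<^sub>1[of v] by (simp add: \<rho>_def)

lemma m\<^sub>1_in_A_iff: "v \<in> V \<Longrightarrow> m\<^sub>1 v \<in> A \<longleftrightarrow> v \<notin> A"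
  using component_min_m\<^sub>1_neq[of v] m\<^sub>1[of v] unfolding lower_side_def by auto

lemma m\<^sub>2_in_A_iff: "v \<in> V \<Longrightarrow> m\<^sub>2 v \<in> A \<longleftrightarrow> v \<notin> A"
proof -
  assume v: "v \<in> V"
  have "m\<^sub>1 (m\<^sub>2 v) = \<rho>' v" unfolding \<rho>'_def by simp
  then have "m\<^sub>2 v \<in> A \<longleftrightarrow> f (m\<^sub>1 v) < f v"
    using component_min_m\<^sub>2[OF v] component_min_rho'[OF v] m\<^sub>2 v unfolding lower_side_def by simp
  then show ?thesis using component_min_m\<^sub>1_neq[OF v] v unfolding lower_side_def by auto
qed

lemma rho_in_A_iff: "v \<in> V \<Longrightarrow> \<rho> v \<in> A \<longleftrightarrow> v \<in> A"
proof -
  assume v: "v \<in> V"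
  have "m\<^sub>1 (\<rho> v) = \<rho>' (m\<^sub>1 v)" unfolding \<rho>_def \<rho>'_def by simp
  then show ?thesis
    using component_min_rho[OF v] component_min_rho'[of "m\<^sub>1 v"] m\<^sub>1 v rho_in[OF v]
    unfolding lower_side_def by simp
qed

lemma sigma_eq: "v \<in> V \<Longrightarrow> \<sigma> v = (if v \<in> A then m\<^sub>1 v else m\<^sub>2 v)"
  unfolding merge_matchings_def \<rho>_def by simp

lemma sigma_in: "v \<in> V \<Longrightarrow> \<sigma> v \<in> V"
  using sigma_eq m\<^sub>1 m\<^sub>2 by simp

lemma sigma_sigma: "v \<in> V \<Longrightarrow> \<sigma> (\<sigma> v) = (if v \<in> A then \<rho> v else \<rho>' v)"
  using sigma_eq m\<^sub>1_in_A_iff m\<^sub>2_in_A_iff m\<^sub>1 m\<^sub>2 by (auto simp: \<rho>_def \<rho>'_def)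

text \<open>The square of \<open>\<sigma>\<close> is \<open>\<rho>\<close> on \<open>A\<close> and \<open>\<rho>\<^sup>-\<^sup>1\<close> off \<open>A\<close>, so it has the same orbits as \<open>\<rho>\<close>.\<close>
lemma graph_edges_sigma_sigma: "graph_edges V (\<sigma> \<circ> \<sigma>) = graph_edges V \<rho>"
proof -
  have "(v, \<sigma> (\<sigma> v)) \<in> graph_edges V \<rho>" if "v \<in> V" for v
    using that sigma_sigma[OF that] rho'_in rho_rho' unfolding graph_edges_def by (cases "v \<in> A") force+
  moreover have "(v, \<rho> v) \<in> graph_edges V (\<sigma> \<circ> \<sigma>)" if "v \<in> V" for v
  proof (cases "v \<in> A")
    case False
    then have "\<sigma> (\<sigma> (\<rho> v)) = v" using sigma_sigma rho_in_A_iff rho_in rho'_rho that by simp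
    then show ?thesis using rho_in[OF that] unfolding graph_edges_def by force
  qed (use that sigma_sigma in \<open>auto simp: graph_edges_def\<close>)
  ultimately show ?thesis by (intro equalityI graph_edges_subsetI) auto
qed

lemma lower_side_sigma: "lower_side V (\<sigma> \<circ> \<sigma>) \<sigma> = A"
proof -
  have f: "component_min V (\<sigma> \<circ> \<sigma>) = f"
    unfolding component_min_def[abs_def] graph_edges_sigma_sigma ..
  have "f v < f (\<sigma> v) \<longleftrightarrow> v \<in> A" if "v \<in> V" for v
    using that sigma_eq component_min_m\<^sub>2 component_min_m\<^sub>1_neq[OF that]
    unfolding lower_side_def by auto
  then show ?thesis unfolding lower_side_def f by auto
qed

lemma inj_on_sigma: "inj_on \<sigma> V"
proof (rule inj_onI)
  fix x y assume x: "x \<in> V" and y: "y \<in> V" and eq: "\<sigma> x = \<sigma> y"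
  have "m\<^sub>1 a \<noteq> m\<^sub>2 b" if "a \<in> V" "b \<in> V" "a \<in> A" "b \<notin> A" for a b
    using that m\<^sub>1_in_A_iff[OF that(1)] m\<^sub>2_in_A_iff[OF that(2)] by metis
  then show "x = y"
    using eq x y sigma_eq m\<^sub>1 m\<^sub>2 by (cases "x \<in> A"; cases "y \<in> A") metis+
qed

end

lemma matching_pair_fixpoint_free_involutions:
  "finite V \<Longrightarrow> m\<^sub>1 \<in> fixpoint_free_involutions V N \<Longrightarrow> m\<^sub>2 \<in> fixpoint_free_involutions V N
    \<Longrightarrow> matching_pair V m\<^sub>1 m\<^sub>2"
  unfolding fixpoint_free_involutions_def matching_pair_def by (auto simp: PiE_def Pi_def)

lemma merge_matchings_in_permutations_within:
  assumes V: "finite V"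
    and m: "m\<^sub>1 \<in> fixpoint_free_involutions V N" "m\<^sub>2 \<in> fixpoint_free_involutions V N"
  shows "merge_matchings V m\<^sub>1 m\<^sub>2 \<in> permutations_within V N"
proof -
  interpret matching_pair V m\<^sub>1 m\<^sub>2 by (rule matching_pair_fixpoint_free_involutions[OF V m])
  have "\<sigma> ` V = V" using endo_inj_surj[OF V _ inj_on_sigma] sigma_in by blast
  then have "bij_betw \<sigma> V V" using inj_on_sigma by (simp add: bij_betw_def)
  moreover have "\<sigma> \<in> V \<rightarrow>\<^sub>E V" using sigma_in by (auto simp: merge_matchings_def)
  moreover have "\<forall>v\<in>V. \<sigma> v \<in> N v" using sigma_eq m unfolding fixpoint_free_involutions_def by auto
  ultimately show ?thesis unfolding permutations_within_def by simp
qed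

text \<open>\<open>\<sigma>\<close> determines \<open>A\<close> (by \<open>lower_side_sigma\<close>), hence \<open>m\<^sub>1\<close> on \<open>A\<close> and \<open>m\<^sub>2\<close> off \<open>A\<close>; the other
  values follow since \<open>m\<^sub>1\<close> and \<open>m\<^sub>2\<close> swap \<open>A\<close> with its complement.\<close>
lemma merge_matchings_inj:
  assumes V: "finite V"
    and m: "m\<^sub>1 \<in> fixpoint_free_involutions V N" "m\<^sub>2 \<in> fixpoint_free_involutions V N"
    and n: "n\<^sub>1 \<in> fixpoint_free_involutions V N" "n\<^sub>2 \<in> fixpoint_free_involutions V N"
    and eq: "merge_matchings V m\<^sub>1 m\<^sub>2 = merge_matchings V n\<^sub>1 n\<^sub>2"
  shows "m\<^sub>1 = n\<^sub>1 \<and> m\<^sub>2 = n\<^sub>2"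
proof -
  interpret M: matching_pair V m\<^sub>1 m\<^sub>2 by (rule matching_pair_fixpoint_free_involutions[OF V m])
  interpret N: matching_pair V n\<^sub>1 n\<^sub>2 by (rule matching_pair_fixpoint_free_involutions[OF V n])
  have A: "M.A = N.A" using M.lower_side_sigma N.lower_side_sigma eq by simp
  have outside: "m v = undefined" if "m \<in> fixpoint_free_involutions V N" "v \<notin> V" for m v
    using that unfolding fixpoint_free_involutions_def by (auto simp: PiE_def extensional_def)
  have "m\<^sub>1 v = n\<^sub>1 v \<and> m\<^sub>2 v = n\<^sub>2 v" if v: "v \<in> V" for v
  proof (cases "v \<in> M.A")
    case True
    have "n\<^sub>2 v \<notin> M.A" "n\<^sub>2 v \<in> V" using N.m\<^sub>2_in_A_iff[OF v] True A N.m\<^sub>2 v by auto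
    then have "m\<^sub>2 (n\<^sub>2 v) = v"
      using M.sigma_eq N.sigma_eq eq A N.m\<^sub>2[OF v] by (metis (full_types))
    then show ?thesis using M.sigma_eq[OF v] N.sigma_eq[OF v] True A eq M.m\<^sub>2 \<open>n\<^sub>2 v \<in> V\<close> by metis
  next
    case False
    have "n\<^sub>1 v \<in> M.A" "n\<^sub>1 v \<in> V" using N.m\<^sub>1_in_A_iff[OF v] False A N.m\<^sub>1 v by auto
    then have "m\<^sub>1 (n\<^sub>1 v) = v"
      using M.sigma_eq N.sigma_eq eq A N.m\<^sub>1[OF v] by (metis (full_types))
    then show ?thesis using M.sigma_eq[OF v] N.sigma_eq[OF v] False A eq M.m\<^sub>1 \<open>n\<^sub>1 v \<in> V\<close> by metis
  qed
  then show ?thesis using outside m n by (metis ext)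
qed

lemma card_fixpoint_free_involutions_sq_le:
  fixes V :: "'a::linorder set"
  assumes "finite V"
  shows "card (fixpoint_free_involutions V N) ^ 2 \<le> card (permutations_within V N)"
proof -
  let ?I = "fixpoint_free_involutions V N"
  have "inj_on (\<lambda>(m\<^sub>1, m\<^sub>2). merge_matchings V m\<^sub>1 m\<^sub>2) (?I \<times> ?I)"
    using merge_matchings_inj[OF assms] by (auto simp: inj_on_def)
  moreover have "(\<lambda>(m\<^sub>1, m\<^sub>2). merge_matchings V m\<^sub>1 m\<^sub>2) ` (?I \<times> ?I) \<subseteq> permutations_within V N"
    using merge_matchings_in_permutations_within[OF assms] by auto
  ultimately have "card (?I \<times> ?I) \<le> card (permutations_within V N)"
    using card_inj_on_le finite_permutations_within[OF assms] by blast
  then show ?thesis by (simp add: card_cartesian_product power2_eq_square)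
qed

section \<open>Perfect matchings and 1-factorizations\<close>

lemma simple_graph_edge_in:
  assumes "simple_graph V E" "{v, u} \<in> E"
  shows "u \<in> V"
  using assms unfolding simple_graph_def by (auto simp: doubleton_eq_iff)

lemma perfect_matching_unique_partner:
  assumes G: "simple_graph V E" and M: "perfect_matching V E M" and v: "v \<in> V"
  shows "\<exists>!u. u \<noteq> v \<and> {v, u} \<in> M"
proof -
  obtain e where e: "e \<in> M" "v \<in> e" and unique: "\<And>e'. e' \<in> M \<Longrightarrow> v \<in> e' \<Longrightarrow> e' = e"
    using M v unfolding perfect_matching_def by blast
  have "e \<in> E" using e(1) M by (auto simp: perfect_matching_def)
  then obtain a b where "a \<noteq> b" "e = {a, b}" using G unfolding simple_graph_def by blast
  then obtain u where u: "u \<noteq> v" "e = {v, u}" using e(2) by (metis empty_iff insert_commute insert_iff)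
  have "u' = u" if "u' \<noteq> v" "{v, u'} \<in> M" for u'
    using unique[OF that(2)] u that(1) by (auto simp: doubleton_eq_iff)
  then show ?thesis using u e(1) by blast
qed

definition neighbours :: "'a set \<Rightarrow> 'a set set \<Rightarrow> 'a \<Rightarrow> 'a set" where
  "neighbours V E v = {u\<in>V. {v, u} \<in> E}"

definition matching_partner :: "'a set \<Rightarrow> 'a set set \<Rightarrow> 'a \<Rightarrow> 'a" where
  "matching_partner V M = restrict (\<lambda>v. THE u. u \<noteq> v \<and> {v, u} \<in> M) V"

lemma matching_partner:
  assumes G: "simple_graph V E" and M: "perfect_matching V E M" and v: "v \<in> V"
  shows "matching_partner V M v \<noteq> v" "{v, matching_partner V M v} \<in> M" "matching_partner V M v \<in> V"
proof -
  show "matching_partner V M v \<noteq> v" "{v, matching_partner V M v} \<in> M"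
    using theI'[OF perfect_matching_unique_partner[OF assms]] v by (simp_all add: matching_partner_def)
  then show "matching_partner V M v \<in> V"
    using G M by (auto simp: perfect_matching_def intro: simple_graph_edge_in)
qed

lemma matching_partner_partner:
  assumes G: "simple_graph V E" and M: "perfect_matching V E M" and v: "v \<in> V"
  shows "matching_partner V M (matching_partner V M v) = v"
proof -
  define u where "u = matching_partner V M v"
  have u: "u \<noteq> v" "{u, v} \<in> M" "u \<in> V" using matching_partner[OF assms] by (auto simp: u_def insert_commute)
  have "matching_partner V M u \<noteq> u \<and> {u, matching_partner V M u} \<in> M"
    using matching_partner[OF G M u(3)] by simp
  moreover have "v \<noteq> u \<and> {u, v} \<in> M" using u by simp
  ultimately show ?thesis
    using perfect_matching_unique_partner[OF G M u(3)] unfolding u_def by (metis (no_types, lifting))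
qed

lemma matching_partner_in_fixpoint_free_involutions:
  assumes G: "simple_graph V E" and M: "perfect_matching V E M"
  shows "matching_partner V M \<in> fixpoint_free_involutions V (neighbours V E)"
  using matching_partner[OF G M] matching_partner_partner[OF G M] M
  by (auto simp: fixpoint_free_involutions_def neighbours_def perfect_matching_def matching_partner_def)

lemma perfect_matching_eq_image_partner:
  assumes G: "simple_graph V E" and M: "perfect_matching V E M"
  shows "M = (\<lambda>v. {v, matching_partner V M v}) ` V"
proof
  show "(\<lambda>v. {v, matching_partner V M v}) ` V \<subseteq> M"
  proof
    fix e assume "e \<in> (\<lambda>v. {v, matching_partner V M v}) ` V"
    then obtain v where v: "v \<in> V" and "e = {v, matching_partner V M v}" by (rule imageE)
    then show "e \<in> M" using matching_partner(2)[OF G M v] by simp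
  qed
  show "M \<subseteq> (\<lambda>v. {v, matching_partner V M v}) ` V"
  proof
    fix e assume e: "e \<in> M"
    then have "e \<in> E" using M by (auto simp: perfect_matching_def)
    then obtain a b where ab: "a \<in> V" "e = {a, b}" using G unfolding simple_graph_def by blast
    have "\<exists>!e. e \<in> M \<and> a \<in> e" using M ab(1) by (simp add: perfect_matching_def)
    then have "e = {a, matching_partner V M a}"
      using matching_partner(2)[OF G M ab(1)] e ab(2) by (metis insertI1)
    then show "e \<in> (\<lambda>v. {v, matching_partner V M v}) ` V" using ab(1) by blast
  qed
qed

lemma card_neighbours:
  assumes G: "simple_graph V E" and v: "v \<in> V"
  shows "card (neighbours V E v) = card {e\<in>E. v \<in> e}"
proof (rule bij_betw_same_card[of "\<lambda>u. {v, u}"], rule bij_betwI')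
  show "\<exists>u\<in>neighbours V E v. e = {v, u}" if e: "e \<in> {e \<in> E. v \<in> e}" for e
  proof -
    have "e \<in> E" "v \<in> e" using e by auto
    then obtain a b where "a \<in> V" "b \<in> V" "e = {a, b}" using G unfolding simple_graph_def by blast
    then obtain u where "u \<in> V" "e = {v, u}" using \<open>v \<in> e\<close> by (metis empty_iff insert_commute insert_iff)
    then show ?thesis using e unfolding neighbours_def by auto
  qed
qed (auto simp: neighbours_def doubleton_eq_iff)

theorem card_perfect_matchings_le:
  fixes V :: "'a::linorder set"
  assumes G: "simple_graph V E" and deg: "\<And>v. v \<in> V \<Longrightarrow> card {e\<in>E. v \<in> e} = k"
  shows "real (card {M. perfect_matching V E M}) \<le> exp (real (card V) * ln (fact k) / (2 * real k))"
proof -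
  let ?I = "fixpoint_free_involutions V (neighbours V E)"
  have V: "finite V" using G by (simp add: simple_graph_def)
  have "finite ?I"
    by (rule finite_subset[OF _ finite_PiE[OF V, of "\<lambda>_. V"]]) (use V in \<open>auto simp: fixpoint_free_involutions_def\<close>)
  moreover have "inj_on (matching_partner V) {M. perfect_matching V E M}"
    by (rule inj_onI) (metis G perfect_matching_eq_image_partner mem_Collect_eq)
  ultimately have "card {M. perfect_matching V E M} \<le> card ?I"
    using matching_partner_in_fixpoint_free_involutions[OF G] by (intro card_inj_on_le) auto
  then have "real (card {M. perfect_matching V E M}) ^ 2 \<le> real (card ?I ^ 2)"
    by (simp add: power_mono)
  also have "\<dots> \<le> real (card (permutations_within V (neighbours V E)))"
    using card_fixpoint_free_involutions_sq_le[OF V] by (simp only: of_nat_le_iff)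
  also have "\<dots> \<le> exp (real (card V) * ln (fact k) / real k)"
    using V deg card_neighbours[OF G] by (intro card_permutations_within_le) (auto simp: neighbours_def)
  also have "\<dots> = exp (real (card V) * ln (fact k) / (2 * real k)) ^ 2"
    by (simp flip: exp_double)
  finally show ?thesis by (rule power2_le_imp_le) simp
qed

lemma simple_graph_finite_edges: "simple_graph V E \<Longrightarrow> finite E"
  unfolding simple_graph_def by (auto intro: finite_subset[of E "Pow V"])

lemma finite_one_factorizations: "finite E \<Longrightarrow> finite (one_factorizations V E d)"
  by (rule finite_subset[of _ "{..<d} \<rightarrow>\<^sub>E Pow E"]) (auto simp: one_factorizations_def intro!: finite_PiE)

lemma regular_remove_perfect_matching:
  assumes G: "simple_graph V E" and deg: "\<And>v. v \<in> V \<Longrightarrow> card {e\<in>E. v \<in> e} = Suc d"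
    and M: "perfect_matching V E M" and v: "v \<in> V"
  shows "card {e\<in>E - M. v \<in> e} = d"
proof -
  obtain e where e: "e \<in> M" "v \<in> e" and unique: "\<And>e'. e' \<in> M \<Longrightarrow> v \<in> e' \<Longrightarrow> e' = e"
    using M v unfolding perfect_matching_def by blast
  have "M \<subseteq> E" using M by (simp add: perfect_matching_def)
  then have "{e'\<in>E - M. v \<in> e'} = {e'\<in>E. v \<in> e'} - {e}" "e \<in> {e'\<in>E. v \<in> e'}"
    using e unique by blast+
  then show ?thesis using deg[OF v] simple_graph_finite_edges[OF G] by (simp add: card_Diff_singleton)
qed

lemma inj_on_split_first:
  "inj_on (\<lambda>F. (F 0, restrict (\<lambda>i. F (Suc i)) {..<d})) ({..<Suc d} \<rightarrow>\<^sub>E X)"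
proof (rule inj_onI)
  fix F G assume F: "F \<in> {..<Suc d} \<rightarrow>\<^sub>E X" and G: "G \<in> {..<Suc d} \<rightarrow>\<^sub>E X"
    and eq: "(F 0, restrict (\<lambda>i. F (Suc i)) {..<d}) = (G 0, restrict (\<lambda>i. G (Suc i)) {..<d})"
  have "F i = G i" if "i < Suc d" for i
  proof (cases i)
    case (Suc j)
    then have "restrict (\<lambda>i. F (Suc i)) {..<d} j = restrict (\<lambda>i. G (Suc i)) {..<d} j" using eq by simp
    then show ?thesis using Suc that by simp
  qed (use eq in simp)
  then show "F = G" by (intro PiE_ext[OF F G]) simp
qed

lemma one_factorizations_split_first:
  assumes "F \<in> one_factorizations V E (Suc d)"
  shows "perfect_matching V E (F 0)" "restrict (\<lambda>i. F (Suc i)) {..<d} \<in> one_factorizations V (E - F 0) d"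
proof -
  have F: "F \<in> {..<Suc d} \<rightarrow>\<^sub>E Pow E" "\<forall>i<Suc d. perfect_matching V E (F i)"
    "\<forall>i<Suc d. \<forall>j<Suc d. i \<noteq> j \<longrightarrow> F i \<inter> F j = {}" "(\<Union>i<Suc d. F i) = E"
    using assms unfolding one_factorizations_def by auto
  show "perfect_matching V E (F 0)" using F(2) by simp
  have sub: "F (Suc i) \<subseteq> E - F 0" and pm: "perfect_matching V (E - F 0) (F (Suc i))" if "i < d" for i
  proof -
    have "perfect_matching V E (F (Suc i))" using F(2) that by simp
    moreover have "F (Suc i) \<inter> F 0 = {}" using F(3) that by blast
    ultimately show "F (Suc i) \<subseteq> E - F 0" by (auto simp: perfect_matching_def)
    with \<open>perfect_matching V E (F (Suc i))\<close> show "perfect_matching V (E - F 0) (F (Suc i))"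
      by (simp add: perfect_matching_def)
  qed
  have "(\<Union>i<d. F (Suc i)) = E - F 0"
  proof
    show "(\<Union>i<d. F (Suc i)) \<subseteq> E - F 0" using sub by blast
    show "E - F 0 \<subseteq> (\<Union>i<d. F (Suc i))" using F(4) by (auto simp: lessThan_Suc_eq_insert_0)
  qed
  then show "restrict (\<lambda>i. F (Suc i)) {..<d} \<in> one_factorizations V (E - F 0) d"
    using F(3) sub pm unfolding one_factorizations_def by auto
qed

lemma card_one_factorizations_Suc_le:
  assumes "finite E"
  shows "card (one_factorizations V E (Suc d)) \<le>
    (\<Sum>M\<in>{M. perfect_matching V E M}. card (one_factorizations V (E - M) d))"
proof -
  let ?split = "\<lambda>F. (F 0, restrict (\<lambda>i. F (Suc i)) {..<d})"
  let ?T = "Sigma {M. perfect_matching V E M} (\<lambda>M. one_factorizations V (E - M) d)"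
  have PM: "finite {M. perfect_matching V E M}"
    using assms by (auto simp: perfect_matching_def intro: finite_subset[of _ "Pow E"])
  have "inj_on ?split (one_factorizations V E (Suc d))"
    by (rule inj_on_subset[OF inj_on_split_first[of d "Pow E"]]) (auto simp: one_factorizations_def)
  moreover have "?split ` one_factorizations V E (Suc d) \<subseteq> ?T"
    using one_factorizations_split_first by blast
  moreover have "finite ?T" using PM assms by (intro finite_SigmaI finite_one_factorizations) auto
  ultimately have "card (one_factorizations V E (Suc d)) \<le> card ?T" by (rule card_inj_on_le)
  also have "card ?T = (\<Sum>M\<in>{M. perfect_matching V E M}. card (one_factorizations V (E - M) d))"
    using PM assms by (intro card_SigmaI) (auto intro: finite_one_factorizations)
  finally show ?thesis .
qed

theorem card_one_factorizations_le:
  fixes V :: "'a::linorder set"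
  assumes "simple_graph V E" "\<And>v. v \<in> V \<Longrightarrow> card {e\<in>E. v \<in> e} = d"
  shows "real (card (one_factorizations V E d)) \<le>
    (\<Prod>k=1..d. exp (real (card V) * ln (fact k) / (2 * real k)))"
  using assms
proof (induction d arbitrary: E)
  case 0
  have "one_factorizations V E 0 \<subseteq> {\<lambda>_. undefined}" unfolding one_factorizations_def by auto
  from card_mono[OF _ this] have "card (one_factorizations V E 0) \<le> 1" by simp
  then show ?case by simp
next
  case (Suc d)
  define P where "P = (\<Prod>k=1..d. exp (real (card V) * ln (fact k) / (2 * real k)))"
  have "real (card (one_factorizations V E (Suc d))) \<le>
      (\<Sum>M\<in>{M. perfect_matching V E M}. real (card (one_factorizations V (E - M) d)))"
    using card_one_factorizations_Suc_le[OF simple_graph_finite_edges[OF Suc.prems(1)]]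
    by (simp flip: of_nat_sum)
  also have "\<dots> \<le> (\<Sum>M\<in>{M. perfect_matching V E M}. P)"
  proof (rule sum_mono)
    fix M assume "M \<in> {M. perfect_matching V E M}"
    then have M: "perfect_matching V E M" by simp
    have "simple_graph V (E - M)" using Suc.prems(1) by (auto simp: simple_graph_def)
    then show "real (card (one_factorizations V (E - M) d)) \<le> P"
      unfolding P_def using regular_remove_perfect_matching[OF Suc.prems M] by (rule Suc.IH)
  qed
  also have "\<dots> \<le> exp (real (card V) * ln (fact (Suc d)) / (2 * real (Suc d))) * P"
    using card_perfect_matchings_le[OF Suc.prems] by (simp add: P_def prod_nonneg mult_right_mono)
  also have "\<dots> = (\<Prod>k=1..Suc d. exp (real (card V) * ln (fact k) / (2 * real k)))"
    by (simp add: P_def prod.nat_ivl_Suc' mult.commute)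
  finally show ?case .
qed

section \<open>Estimates\<close>

lemma inverse_succ_le_ln_diff:
  fixes x :: real
  assumes "x > 0"
  shows "1 / (x + 1) \<le> ln (x + 1) - ln x"
proof -
  have "ln (x / (x + 1)) \<le> x / (x + 1) - 1" using assms by (intro ln_le_minus_one) simp
  also have "\<dots> = - (1 / (x + 1))" using assms by (simp add: field_simps)
  finally show ?thesis using assms by (simp add: ln_div)
qed

lemma ln_fact_le: "k \<ge> 1 \<Longrightarrow> ln (fact k) \<le> (real k + 1) * ln (real k) - real k + 1"
proof (induction k rule: dec_induct)
  case (step k)
  have "ln (fact (Suc k)) = ln (real k + 1) + ln (fact k)"
    using step.hyps by (simp add: ln_mult)
  also have "\<dots> \<le> ln (real k + 1) + ((real k + 1) * ln (real k) - real k + 1)"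
    using step.IH by simp
  also have "\<dots> \<le> (real (Suc k) + 1) * ln (real (Suc k)) - real (Suc k) + 1"
    using inverse_succ_le_ln_diff[of "real k"] step.hyps by (simp add: field_simps)
  finally show ?case .
qed simp

lemma sum_inverse_le_ln: "d \<ge> 1 \<Longrightarrow> (\<Sum>k=1..d. 1 / real k) \<le> 1 + ln (real d)"
proof (induction d rule: dec_induct)
  case (step d)
  then show ?case using inverse_succ_le_ln_diff[of "real d"] by (simp add: add.commute)
qed simp

lemma sum_ln_fact_div_le:
  assumes d: "d \<ge> 1"
  shows "(\<Sum>k=1..d. ln (fact k) / real k) \<le>
    real d * ln (real d) - 2 * real d + (ln (real d) + 1) * (ln (real d) + 2)"
proof -
  have "(\<Sum>k=1..d. ln (fact k) / real k) \<le> (\<Sum>k=1..d. ln (real k) - 1 + (ln (real d) + 1) * (1 / real k))"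
  proof (rule sum_mono)
    fix k assume k: "k \<in> {1..d}"
    then have "ln (fact k) / real k \<le> ((real k + 1) * ln (real k) - real k + 1) / real k"
      using ln_fact_le[of k] by (simp add: divide_right_mono)
    also have "\<dots> = ln (real k) - 1 + (ln (real k) + 1) * (1 / real k)" using k by (simp add: field_simps)
    also have "\<dots> \<le> ln (real k) - 1 + (ln (real d) + 1) * (1 / real k)"
      using k by (simp add: divide_right_mono)
    finally show "ln (fact k) / real k \<le> ln (real k) - 1 + (ln (real d) + 1) * (1 / real k)" .
  qed
  also have "\<dots> = ln (fact d) - real d + (ln (real d) + 1) * (\<Sum>k=1..d. 1 / real k)"
    using sum_ln_eq_ln_fact[of d] by (simp add: sum.distrib sum_subtractf sum_distrib_left)
  also have "\<dots> \<le> ((real d + 1) * ln (real d) - real d + 1) - real d + (ln (real d) + 1) * (1 + ln (real d))"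
    using ln_fact_le[OF d] mult_left_mono[OF sum_inverse_le_ln[OF d], of "ln (real d) + 1"] d by simp
  also have "\<dots> = real d * ln (real d) - 2 * real d + (ln (real d) + 1) * (ln (real d) + 2)"
    by (simp add: algebra_simps)
  finally show ?thesis .
qed

lemma eventually_ln_sq_le:
  "eventually (\<lambda>x::real. (ln x + 1) * (ln x + 2) \<le> x * ln (1 + 1 / sqrt (2 * x))) at_top"
  by real_asymp

lemma exp_sum_ln_fact_div_le_power:
  assumes d: "d \<ge> 1" and x: "x \<ge> 0" and err: "(ln (real d) + 1) * (ln (real d) + 2) \<le> real d * ln (1 + x)"
    and n: "even n"
  shows "exp (real n / 2 * (\<Sum>k=1..d. ln (fact k) / real k)) \<le> ((1 + x) * real d / exp 2) ^ (d * n div 2)"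
proof -
  have "real n / 2 * (\<Sum>k=1..d. ln (fact k) / real k) \<le>
      real n / 2 * (real d * (ln (1 + x) + ln (real d) - 2))"
    using sum_ln_fact_div_le[OF d] err by (intro mult_left_mono) (simp_all add: algebra_simps)
  also have "\<dots> = real (d * n div 2) * ln ((1 + x) * real d / exp 2)"
    using n d x by (auto simp: ln_mult ln_div elim!: evenE)
  finally have "exp (real n / 2 * (\<Sum>k=1..d. ln (fact k) / real k)) \<le>
      exp (real (d * n div 2) * ln ((1 + x) * real d / exp 2))" by simp
  also have "\<dots> = ((1 + x) * real d / exp 2) ^ (d * n div 2)"
    using d x by (simp add: exp_of_nat_mult)
  finally show ?thesis .
qed

theorem theorem10:
  shows "\<exists>n0::nat. \<forall>n::nat. \<forall>d::nat. \<forall>(V::nat set) (E::nat set set).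
     even n \<and> n \<ge> n0 \<and> real d \<ge> real n / 2 \<and> card V = n \<and> regular_graph V E d \<longrightarrow>
     real (num_one_factorizations V E d)
       \<le> ((1 + real n powr (-1/2)) * real d / exp 2) ^ (d * n div 2)"
proof -
  obtain D :: real where D: "\<And>x. x \<ge> D \<Longrightarrow> (ln x + 1) * (ln x + 2) \<le> x * ln (1 + 1 / sqrt (2 * x))"
    using eventually_ln_sq_le unfolding eventually_at_top_linorder by blast
  show ?thesis
  proof (intro exI[of _ "2 * nat \<lceil>D\<rceil> + 2"] allI impI, elim conjE)
    fix n d :: nat and V :: "nat set" and E :: "nat set set"
    assume n: "even n" "2 * nat \<lceil>D\<rceil> + 2 \<le> n" and d: "real n / 2 \<le> real d"
      and V: "card V = n" and G: "regular_graph V E d"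
    have "real d \<ge> D" "d \<ge> 1" using n(2) d by linarith+
    have "sqrt (real n) \<le> sqrt (2 * real d)" "sqrt (real n) > 0" using d n(2) by auto
    then have "1 / sqrt (2 * real d) \<le> real n powr (-1/2)"
      by (simp add: powr_minus_divide powr_half_sqrt frac_le)
    then have "ln (1 + 1 / sqrt (2 * real d)) \<le> ln (1 + real n powr (-1/2))"
      by (subst ln_le_cancel_iff) (simp_all add: add_pos_nonneg)
    then have err: "(ln (real d) + 1) * (ln (real d) + 2) \<le> real d * ln (1 + real n powr (-1/2))"
      using order_trans[OF D[OF \<open>real d \<ge> D\<close>] mult_left_mono[OF _ of_nat_0_le_iff]] by blast
    have "real (num_one_factorizations V E d) \<le> exp (real n / 2 * (\<Sum>k=1..d. ln (fact k) / real k))"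
      using card_one_factorizations_le[of V E d] G V
      by (simp add: regular_graph_def num_one_factorizations_def exp_sum sum_distrib_left)
    also have "\<dots> \<le> ((1 + real n powr (-1/2)) * real d / exp 2) ^ (d * n div 2)"
      using err by (intro exp_sum_ln_fact_div_le_power[OF \<open>d \<ge> 1\<close>] n(1)) simp_all
    finally show "real (num_one_factorizations V E d)
       \<le> ((1 + real n powr (-1/2)) * real d / exp 2) ^ (d * n div 2)" .
  qed
qed

end
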